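(* Let $\mathcal{P}=(\mathrm{Var},C)$ be a non-overlapping program and let $\varphi=\mathbb{P}_{\bowtie\lambda}(\lozenge G)$ with $\bowtie\in\{<,\leq\}$ be a safety reachability property such that $\mathcal{P}\not\models\varphi$. Then a set $E\subseteq C$ of commands is a high-level counterexample for $\mathcal{P}$ and $\varphi$ if and only if it is a program-level counterexample for $\mathcal{P}$ and $\{\varphi\}$.
   Context: Programs: a program $\mathcal{P}=(\mathrm{Var},C)$ consists of a finite set $\mathrm{Var}$ of variables, each with a finite integer range and an initial value, and a finite set $C$ of guarded commands of the form $g\to p_1:u_1+\dots+p_n:u_n$, where the guard $g$ is a Boolean expression over $\mathrm{Var}$, the $p_i$ are expressions over $\mathrm{Var}$ that evaluate to a probability distribution in every state satisfying $g$, and each update $u_i$ assigns expressions over $\mathrm{Var}$ to variables. A state is a valuation of $\mathrm{Var}$. A program is non-overlapping if no state satisfies the guards of two distinct commands. The underlying MC $[\![\mathcal{P}]\!]$ has the valuations as states, the initial valuation as initial state, and from a state $s$ in which command $g\to\sum_i p_i:u_i$ is enabled it moves to $u_i(s)$ with probability $p_i(s)$. $\mathsf{fixdl}(\mathcal{P})$ is $\mathcal{P}$ extended with a command that is enabled exactly in states where no guard holds and produces a self-loop. For $E\subseteq C$, $\mathcal{P}_{|E}=(\mathrm{Var},E)$. For $G$ a set of states (given by a predicate), $\mathcal{P}\models\mathbb{P}_{\bowtie\lambda}(\lozenge G)$ iff in $[\![\mathsf{fixdl}(\mathcal{P})]\!]$ the probability of reaching $G$ from the initial state is $\bowtie\lambda$.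 A high-level counterexample for $\mathcal{P}$ and $\varphi$ (with $\mathcal{P}\not\models\varphi$) is a set $E\subseteq C$ with $\mathsf{fixdl}(\mathcal{P}_{|E})\not\models\varphi$. A program-level counterexample for $\mathcal{P}$ and a specification $\Phi$ (with $\mathcal{P}\not\models\Phi$) is a set $E\subseteq C$ such that for every non-overlapping program $\mathcal{P}'=(\mathrm{Var},E'')$ with $E''\supseteq E$ we have $\mathsf{fixdl}(\mathcal{P}')\not\models\Phi$. *)

theory Defs
  imports Complex_Main
begin

type_synonym 'v state = "'v \<Rightarrow> int"

record 'v vardecl =
  vars :: "'v set"
  bounds :: "'v \<Rightarrow> int \<times> int"
  init :: "'v state"

text \<open>Guarded command  g -> p_1:u_1 + ... + p_n:u_n ; expressions are semantic
  functions of the state.\<close>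
record 'v command =
  guard :: "'v state \<Rightarrow> bool"
  branches :: "(('v state \<Rightarrow> real) \<times> ('v state \<Rightarrow> 'v state)) list"

type_synonym 'v program = "'v vardecl \<times> 'v command set"

definition valid_state :: "'v vardecl \<Rightarrow> 'v state \<Rightarrow> bool" where
  "valid_state D s \<longleftrightarrow>
     (\<forall>x\<in>vars D. fst (bounds D x) \<le> s x \<and> s x \<le> snd (bounds D x)) \<and>
     (\<forall>x. x \<notin> vars D \<longrightarrow> s x = 0)"

definition wf_decl :: "'v vardecl \<Rightarrow> bool" where
  "wf_decl D \<longleftrightarrow> finite (vars D) \<and> valid_state D (init D)"

definition wf_command :: "'v vardecl \<Rightarrow> 'v command \<Rightarrow> bool" where
  "wf_command D c \<longleftrightarrow>
     (\<forall>s. valid_state D s \<and> guard c s \<longrightarrow>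
        (\<forall>(p, u)\<in>set (branches c). 0 \<le> p s \<and> valid_state D (u s)) \<and>
        (\<Sum>(p, u)\<leftarrow>branches c. p s) = 1)"

definition is_program :: "'v program \<Rightarrow> bool" where
  "is_program P \<longleftrightarrow> wf_decl (fst P) \<and> finite (snd P) \<and> (\<forall>c\<in>snd P. wf_command (fst P) c)"

definition non_overlapping :: "'v program \<Rightarrow> bool" where
  "non_overlapping P \<longleftrightarrow>
     (\<forall>s. valid_state (fst P) s \<longrightarrow>
        (\<forall>c1\<in>snd P. \<forall>c2\<in>snd P. guard c1 s \<and> guard c2 s \<longrightarrow> c1 = c2))"

definition restrict :: "'v program \<Rightarrow> 'v command set \<Rightarrow> 'v program" where
  "restrict P E = (fst P, E)"

definition dl_command :: "'v command set \<Rightarrow> 'v command" where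
  "dl_command C = \<lparr>guard = (\<lambda>s. \<not> (\<exists>c\<in>C. guard c s)), branches = [(\<lambda>_. 1, id)]\<rparr>"

definition fixdl :: "'v program \<Rightarrow> 'v program" where
  "fixdl P = (fst P, insert (dl_command (snd P)) (snd P))"

text \<open>Probability of reaching G within n steps from s in the MC of a
  (non-overlapping) program with command set C.\<close>
fun reach_bounded :: "'v command set \<Rightarrow> ('v state \<Rightarrow> bool) \<Rightarrow> nat \<Rightarrow> 'v state \<Rightarrow> real" where
  "reach_bounded C G 0 s = (if G s then 1 else 0)"
| "reach_bounded C G (Suc n) s =
     (if G s then 1
      else (\<Sum>c\<in>{c\<in>C. guard c s}. \<Sum>(p, u)\<leftarrow>branches c. p s * reach_bounded C G n (u s)))"

definition reach_prob :: "'v program \<Rightarrow> ('v state \<Rightarrow> bool) \<Rightarrow> real" where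
  "reach_prob P G = (SUP n. reach_bounded (snd P) G n (init (fst P)))"

datatype cmp = Lt | Le | Gt | Ge

fun cmp_holds :: "cmp \<Rightarrow> real \<Rightarrow> real \<Rightarrow> bool" where
  "cmp_holds Lt x l = (x < l)"
| "cmp_holds Le x l = (x \<le> l)"
| "cmp_holds Gt x l = (x > l)"
| "cmp_holds Ge x l = (x \<ge> l)"

datatype 'v reach_prop = PReach cmp real "'v state \<Rightarrow> bool"

fun models :: "'v program \<Rightarrow> 'v reach_prop \<Rightarrow> bool" where
  "models P (PReach b lam G) = cmp_holds b (reach_prob (fixdl P) G) lam"

definition models_spec :: "'v program \<Rightarrow> 'v reach_prop set \<Rightarrow> bool" where
  "models_spec P \<Phi> \<longleftrightarrow> (\<forall>\<phi>\<in>\<Phi>. models P \<phi>)"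

definition high_level_cex :: "'v program \<Rightarrow> 'v reach_prop \<Rightarrow> 'v command set \<Rightarrow> bool" where
  "high_level_cex P \<phi> E \<longleftrightarrow> E \<subseteq> snd P \<and> \<not> models (fixdl (restrict P E)) \<phi>"

definition program_level_cex :: "'v program \<Rightarrow> 'v reach_prop set \<Rightarrow> 'v command set \<Rightarrow> bool" where
  "program_level_cex P \<Phi> E \<longleftrightarrow> E \<subseteq> snd P \<and>
     (\<forall>E''. E \<subseteq> E'' \<and> is_program (fst P, E'') \<and> non_overlapping (fst P, E'')
            \<longrightarrow> \<not> models_spec (fixdl (fst P, E'')) \<Phi>)"

end

theory Submission
  imports Defs
begin

text \<open>For a safety bound (\<open><\<close> or \<open>\<le>\<close>) a violation only gets worse when commands are added:
  in a non-overlapping program every state enabling a command of \<open>E\<close> enables the same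
  command in any \<open>E'' \<supseteq> E\<close>, while states deadlocking under \<open>E\<close> only self-loop and
  contribute probability 0 outside \<open>G\<close>. Hence the bounded reachability probabilities,
  and so their supremum, are monotone in the command set; together with the fact that
  \<open>P|E\<close> is itself a non-overlapping program this gives both directions.\<close>

abbreviation deadlock_fixed :: "'v command set \<Rightarrow> 'v command set" where
  "deadlock_fixed E \<equiv> insert (dl_command E) E"

lemma reach_bounded_insert_disabled:
  assumes "\<And>s. \<not> guard d s"
  shows "reach_bounded (insert d C) G n s = reach_bounded C G n s"
proof (induction n arbitrary: s)
  case 0
  then show ?case by simp
next
  case (Suc n)
  have "{c \<in> insert d C. guard c s} = {c \<in> C. guard c s}"
    using assms by auto
  then show ?case
    using Suc by simp
qed

lemma dl_command_deadlock_fixed_disabled: "\<not> guard (dl_command (deadlock_fixed E)) s"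
  by (auto simp: dl_command_def)

text \<open>\<open>models\<close> applies \<open>fixdl\<close> once more to \<open>fixdl P|E\<close>; the second deadlock command is
  never enabled because \<open>fixdl\<close> already removed all deadlocks.\<close>

lemma reach_prob_fixdl_fixdl:
  "reach_prob (fixdl (fixdl (D, E))) G = (SUP n. reach_bounded (deadlock_fixed E) G n (init D))"
  unfolding reach_prob_def fixdl_def
  by (simp add: reach_bounded_insert_disabled[OF dl_command_deadlock_fixed_disabled])

lemma reach_bounded_Suc_enabled:
  assumes "non_overlapping (D, E)" "valid_state D s" "c \<in> E" "guard c s" "\<not> G s"
  shows "reach_bounded (deadlock_fixed E) G (Suc n) s =
    (\<Sum>(p, u)\<leftarrow>branches c. p s * reach_bounded (deadlock_fixed E) G n (u s))"
proof -
  have "{x \<in> deadlock_fixed E. guard x s} = {c}"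
    using assms unfolding non_overlapping_def dl_command_def by auto
  then show ?thesis
    using assms(5) by simp
qed

lemma reach_bounded_deadlock:
  assumes "\<not> (\<exists>c\<in>E. guard c s)" "\<not> G s"
  shows "reach_bounded (deadlock_fixed E) G n s = 0"
proof (induction n)
  case 0
  then show ?case using assms by simp
next
  case (Suc n)
  have "{x \<in> deadlock_fixed E. guard x s} = {dl_command E}"
    using assms(1) unfolding dl_command_def by auto
  then show ?case
    using assms(2) Suc by (simp add: dl_command_def)
qed

lemma wf_command_branches:
  assumes "wf_command D c" "valid_state D s" "guard c s"
  shows "\<forall>(p, u)\<in>set (branches c). 0 \<le> p s \<and> valid_state D (u s)"
    and "(\<Sum>(p, u)\<leftarrow>branches c. p s) = 1"
  using assms unfolding wf_command_def by auto

lemma reach_bounded_bounds: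
  assumes "non_overlapping (D, E)" "\<forall>c\<in>E. wf_command D c" "valid_state D s"
  shows "0 \<le> reach_bounded (deadlock_fixed E) G n s \<and> reach_bounded (deadlock_fixed E) G n s \<le> 1"
  using assms(3)
proof (induction n arbitrary: s)
  case 0
  then show ?case by simp
next
  case (Suc n)
  consider "G s" | "\<not> G s" "\<not> (\<exists>c\<in>E. guard c s)" | c where "\<not> G s" "c \<in> E" "guard c s"
    by blast
  then show ?case
  proof cases
    case 3
    note branches = wf_command_branches[OF bspec[OF assms(2) 3(2)] Suc.prems 3(3)]
    let ?term = "\<lambda>(p, u). p s * reach_bounded (deadlock_fixed E) G n (u s)"
    have term_bounds: "0 \<le> ?term (p, u) \<and> ?term (p, u) \<le> p s"
      if "(p, u) \<in> set (branches c)" for p u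
      using that branches(1) Suc.IH[of "u s"] by (auto intro: mult_left_le)
    have "0 \<le> (\<Sum>x\<leftarrow>branches c. ?term x)"
      by (intro sum_list_nonneg) (force dest: term_bounds)
    moreover have "(\<Sum>x\<leftarrow>branches c. ?term x) \<le> (\<Sum>(p, u)\<leftarrow>branches c. p s)"
      by (intro sum_list_mono) (force dest: term_bounds)
    ultimately show ?thesis
      using reach_bounded_Suc_enabled[where G=G, OF assms(1) Suc.prems 3(2,3,1)] branches by simp
  next
    case 2
    then show ?thesis
      by (simp only: reach_bounded_deadlock[where G=G and s=s, OF 2(2,1)]) simp
  qed simp
qed

lemma reach_bounded_mono_commands:
  assumes "E \<subseteq> E''" "non_overlapping (D, E'')" "\<forall>c\<in>E''. wf_command D c" "valid_state D s"
  shows "reach_bounded (deadlock_fixed E) G n s \<le> reach_bounded (deadlock_fixed E'') G n s"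
  using assms(4)
proof (induction n arbitrary: s)
  case 0
  then show ?case by simp
next
  case (Suc n)
  consider "G s" | "\<not> G s" "\<not> (\<exists>c\<in>E. guard c s)" | c where "\<not> G s" "c \<in> E" "guard c s"
    by blast
  then show ?case
  proof cases
    case 2
    then show ?thesis
      using reach_bounded_deadlock[where G=G and s=s, OF 2(2,1)] reach_bounded_bounds[OF assms(2,3) Suc.prems]
      by presburger
  next
    case 3
    have "non_overlapping (D, E)"
      using assms(1,2) unfolding non_overlapping_def by auto
    moreover have "c \<in> E''"
      using 3 assms(1) by blast
    moreover note branches = wf_command_branches[OF bspec[OF assms(3)] Suc.prems 3(3)]
    ultimately show ?thesis
      using reach_bounded_Suc_enabled[where G=G, OF _ Suc.prems 3(2,3,1)]
        reach_bounded_Suc_enabled[where G=G, OF assms(2) Suc.prems _ 3(3,1)]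
      by (auto intro!: sum_list_mono mult_left_mono Suc.IH)
  qed simp
qed

lemma reach_prob_fixdl_mono_commands:
  assumes "E \<subseteq> E''" "is_program (D, E'')" "non_overlapping (D, E'')"
  shows "reach_prob (fixdl (fixdl (D, E))) G \<le> reach_prob (fixdl (fixdl (D, E''))) G"
proof -
  have wf: "\<forall>c\<in>E''. wf_command D c" and init: "valid_state D (init D)"
    using assms(2) unfolding is_program_def wf_decl_def by auto
  have bdd: "bdd_above (range (\<lambda>n. reach_bounded (deadlock_fixed E'') G n (init D)))"
    using reach_bounded_bounds[OF assms(3) wf init] by (auto intro!: bdd_aboveI[of _ 1])
  show ?thesis
    unfolding reach_prob_fixdl_fixdl
    by (rule cSUP_mono[OF _ bdd]) (use reach_bounded_mono_commands[OF assms(1,3) wf init] in auto)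
qed

lemma cmp_holds_downward_closed:
  assumes "b \<in> {Lt, Le}" "x \<le> y" "cmp_holds b y l"
  shows "cmp_holds b x l"
  using assms by auto

lemma is_program_restrict:
  assumes "is_program (D, C)" "E \<subseteq> C"
  shows "is_program (D, E)"
  using assms unfolding is_program_def by (auto intro: finite_subset)

lemma non_overlapping_restrict:
  assumes "non_overlapping (D, C)" "E \<subseteq> C"
  shows "non_overlapping (D, E)"
  using assms unfolding non_overlapping_def by auto

theorem proposition3:
  fixes P :: "'v program" and b :: cmp and lam :: real and G :: "'v state \<Rightarrow> bool"
    and E :: "'v command set"
  assumes "is_program P"
    and "non_overlapping P"
    and "b \<in> {Lt, Le}"
    and "\<not> models P (PReach b lam G)"
    and "E \<subseteq> snd P"
  shows "high_level_cex P (PReach b lam G) E \<longleftrightarrow> program_level_cex P {PReach b lam G} E"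
proof
  assume "high_level_cex P (PReach b lam G) E"
  then have violated: "\<not> cmp_holds b (reach_prob (fixdl (fixdl (fst P, E))) G) lam"
    unfolding high_level_cex_def restrict_def by simp
  have "\<not> cmp_holds b (reach_prob (fixdl (fixdl (fst P, E''))) G) lam"
    if "E \<subseteq> E''" "is_program (fst P, E'')" "non_overlapping (fst P, E'')" for E''
    using violated cmp_holds_downward_closed[OF assms(3) reach_prob_fixdl_mono_commands[OF that]]
    by blast
  then show "program_level_cex P {PReach b lam G} E"
    using assms(5) unfolding program_level_cex_def models_spec_def by simp
next
  assume "program_level_cex P {PReach b lam G} E"
  moreover have "is_program (fst P, E)" "non_overlapping (fst P, E)"
    using is_program_restrict[of "fst P" "snd P"] non_overlapping_restrict[of "fst P" "snd P"]
      assms(1,2,5) by simp_all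
  ultimately show "high_level_cex P (PReach b lam G) E"
    using assms(5) unfolding program_level_cex_def high_level_cex_def restrict_def models_spec_def
    by auto
qed

end
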